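(* Let $G$ be a locally soluble group in which every non-abelian subgroup $H$ satisfies $C_G(H)\le H$. If the hypercenter of $G$ contains two non-commuting elements of finite order, then $G$ is locally finite.
   Context: The hypercenter of $G$ is the final term of the (transfinite) upper central series of $G$. $C_G(H)$ denotes the centralizer of $H$ in $G$. *)

theory Defs
  imports "HOL-Algebra.Algebra"
begin

definition centralizer_set :: "('a, 'b) monoid_scheme \<Rightarrow> 'a set \<Rightarrow> 'a set" where
  "centralizer_set G H = {g \<in> carrier G. \<forall>h \<in> H. g \<otimes>\<^bsub>G\<^esub> h = h \<otimes>\<^bsub>G\<^esub> g}"

text \<open>The hypercenter (last term of the transfinite upper central
  series, obtained by iterating this monotone operator transfinitely from {1}, taking unions
  at limits) is the least fixed point of this operator.\<close>
definition upper_central_step :: "('a, 'b) monoid_scheme \<Rightarrow> 'a set \<Rightarrow> 'a set" where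
  "upper_central_step G N = {\<one>\<^bsub>G\<^esub>} \<union>
     {g \<in> carrier G. \<forall>x \<in> carrier G.
        g \<otimes>\<^bsub>G\<^esub> x \<otimes>\<^bsub>G\<^esub> inv\<^bsub>G\<^esub> g \<otimes>\<^bsub>G\<^esub> inv\<^bsub>G\<^esub> x \<in> N}"

definition hypercenter :: "('a, 'b) monoid_scheme \<Rightarrow> 'a set" where
  "hypercenter G = lfp (upper_central_step G)"

definition locally_soluble :: "('a, 'b) monoid_scheme \<Rightarrow> bool" where
  "locally_soluble G \<longleftrightarrow>
     (\<forall>S. S \<subseteq> carrier G \<and> finite S \<longrightarrow> solvable (G\<lparr>carrier := generate G S\<rparr>))"

definition locally_finite_group :: "('a, 'b) monoid_scheme \<Rightarrow> bool" where
  "locally_finite_group G \<longleftrightarrow>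
     (\<forall>S. S \<subseteq> carrier G \<and> finite S \<longrightarrow> finite (generate G S))"

definition finite_order_elem :: "('a, 'b) monoid_scheme \<Rightarrow> 'a \<Rightarrow> bool" where
  "finite_order_elem G x \<longleftrightarrow> x \<in> carrier G \<and> (\<exists>n::nat. n > 0 \<and> x [^]\<^bsub>G\<^esub> n = \<one>\<^bsub>G\<^esub>)"

end

theory Submission
  imports Defs
begin

text \<open>Let \<open>x\<close>, \<open>y\<close> be non-commuting elements of finite order in the hypercentre and let
  \<open>H\<close> be generated by a finite set together with \<open>x\<close> and \<open>y\<close>. As \<open>H\<close> is finitely
  generated, \<open>x\<close> and \<open>y\<close> lie in a finite term \<open>Z\<^sub>k(H)\<close> of its upper central series.
  Dietzmann's lemma (a finite conjugation-closed set of elements of finite order generates a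
  finite subgroup), applied in the quotients \<open>H/Z\<^sub>i(H)\<close>, shows that finitely many elements of
  finite order of \<open>Z\<^sub>k(H)\<close> generate a finite subgroup. Hence the normal closure \<open>M\<close> of
  \<open>{x, y}\<close> in \<open>H\<close> is finite: it is generated by the iterated commutators of \<open>x\<close>, \<open>y\<close> with
  the generators, only finitely many of which are nontrivial. Since \<open>\<langle>x, y\<rangle>\<close> is
  non-abelian, \<open>C\<^sub>H(M) \<le> C\<^sub>G(\<langle>x, y\<rangle>) \<le> \<langle>x, y\<rangle> \<le> M\<close>, and as \<open>H/C\<^sub>H(M)\<close> embeds into
  the finite group of automorphisms of \<open>M\<close>, \<open>H\<close> is finite.\<close>

definition commutator :: "('a, 'b) monoid_scheme \<Rightarrow> 'a \<Rightarrow> 'a \<Rightarrow> 'a" where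
  "commutator G a b = a \<otimes>\<^bsub>G\<^esub> b \<otimes>\<^bsub>G\<^esub> inv\<^bsub>G\<^esub> a \<otimes>\<^bsub>G\<^esub> inv\<^bsub>G\<^esub> b"

context group
begin

lemma inv_mult_cancel_left [simp]: "\<lbrakk>x \<in> carrier G; y \<in> carrier G\<rbrakk> \<Longrightarrow> inv x \<otimes> (x \<otimes> y) = y"
  by (simp add: m_assoc [symmetric])

lemma mult_inv_cancel_left [simp]: "\<lbrakk>x \<in> carrier G; y \<in> carrier G\<rbrakk> \<Longrightarrow> x \<otimes> (inv x \<otimes> y) = y"
  by (simp add: m_assoc [symmetric])

lemma commutator_closed [simp]:
  "a \<in> carrier G \<Longrightarrow> b \<in> carrier G \<Longrightarrow> commutator G a b \<in> carrier G"
  by (simp add: commutator_def)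

lemma commutator_one_left [simp]: "h \<in> carrier G \<Longrightarrow> commutator G \<one> h = \<one>"
  by (simp add: commutator_def)

lemma commutator_one_right [simp]: "u \<in> carrier G \<Longrightarrow> commutator G u \<one> = \<one>"
  by (simp add: commutator_def)

lemma commutator_mult_left:
  "\<lbrakk>a \<in> carrier G; b \<in> carrier G; h \<in> carrier G\<rbrakk> \<Longrightarrow>
    commutator G (a \<otimes> b) h = a \<otimes> commutator G b h \<otimes> inv a \<otimes> commutator G a h"
  by (simp add: commutator_def m_assoc inv_mult_group)

lemma commutator_inv_left:
  "\<lbrakk>a \<in> carrier G; h \<in> carrier G\<rbrakk> \<Longrightarrow>
    commutator G (inv a) h = inv a \<otimes> inv (commutator G a h) \<otimes> a"
  by (simp add: commutator_def m_assoc inv_mult_group)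

lemma commutator_conj_left:
  "\<lbrakk>a \<in> carrier G; x \<in> carrier G; h \<in> carrier G\<rbrakk> \<Longrightarrow>
    commutator G (x \<otimes> a \<otimes> inv x) h = x \<otimes> commutator G a (inv x \<otimes> h \<otimes> x) \<otimes> inv x"
  by (simp add: commutator_def m_assoc inv_mult_group)

lemma commutator_mult_right:
  "\<lbrakk>u \<in> carrier G; a \<in> carrier G; b \<in> carrier G\<rbrakk> \<Longrightarrow>
    commutator G u (a \<otimes> b) = commutator G u a \<otimes> (a \<otimes> commutator G u b \<otimes> inv a)"
  by (simp add: commutator_def m_assoc inv_mult_group)

lemma commutator_inv_right:
  "\<lbrakk>u \<in> carrier G; a \<in> carrier G\<rbrakk> \<Longrightarrow>
    commutator G u (inv a) = inv a \<otimes> inv (commutator G u a) \<otimes> a"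
  by (simp add: commutator_def m_assoc inv_mult_group)

lemma conj_pow:
  "\<lbrakk>b \<in> carrier G; a \<in> carrier G\<rbrakk> \<Longrightarrow> (b \<otimes> a \<otimes> inv b) [^] (n::nat) = b \<otimes> a [^] n \<otimes> inv b"
  by (induction n) (auto simp: m_assoc)

lemma finite_order_elem_iff_ord:
  "finite_order_elem G x \<longleftrightarrow> x \<in> carrier G \<and> ord x \<noteq> 0"
  by (metis finite_order_elem_def ord_eq_0 bot_nat_0.not_eq_extremum)

lemma finite_order_elem_of_finite_subgroup:
  assumes "subgroup K G" "finite K" "x \<in> K"
  shows "finite_order_elem G x"
proof -
  have x: "x \<in> carrier G" using assms subgroup.subset by blast
  have "generate G {x} \<subseteq> K" using assms generate_subgroup_incl by simp
  then have "finite (carrier (subgroup_generated G {x}))"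
    using assms(2) x by (simp add: carrier_subgroup_generated finite_subset)
  then show ?thesis using x by (simp add: finite_order_elem_iff_ord finite_cyclic_subgroup_order)
qed

lemma finite_order_elem_conj:
  assumes "finite_order_elem G a" "b \<in> carrier G"
  shows "finite_order_elem G (b \<otimes> a \<otimes> inv b)"
  using assms by (auto simp: finite_order_elem_def conj_pow)

end

section \<open>Dietzmann's lemma\<close>

definition word_prod :: "('a, 'b) monoid_scheme \<Rightarrow> 'a list \<Rightarrow> 'a" where
  "word_prod G ws = foldr (\<otimes>\<^bsub>G\<^esub>) ws \<one>\<^bsub>G\<^esub>"

context group
begin

lemma word_prod_simps [simp]:
  "word_prod G [] = \<one>" "word_prod G (a # ws) = a \<otimes> word_prod G ws"
  by (simp_all add: word_prod_def)

lemma word_prod_closed [simp]: "set ws \<subseteq> carrier G \<Longrightarrow> word_prod G ws \<in> carrier G"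
  by (induction ws) auto

lemma word_prod_append:
  "\<lbrakk>set us \<subseteq> carrier G; set vs \<subseteq> carrier G\<rbrakk> \<Longrightarrow>
    word_prod G (us @ vs) = word_prod G us \<otimes> word_prod G vs"
  by (induction us) (auto simp: m_assoc)

lemma word_prod_replicate: "x \<in> carrier G \<Longrightarrow> word_prod G (replicate n x) = x [^] n"
  by (induction n) (auto, metis nat_pow_Suc nat_pow_Suc2)

lemma word_prod_map_conj:
  "\<lbrakk>x \<in> carrier G; set ws \<subseteq> carrier G\<rbrakk> \<Longrightarrow>
    word_prod G (map (\<lambda>w. x \<otimes> w \<otimes> inv x) ws) = x \<otimes> word_prod G ws \<otimes> inv x"
  by (induction ws) (auto simp: m_assoc)

text \<open>Occurrences of \<open>x\<close> in a word over a conjugation-closed set can be moved to the right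
  end, at the price of conjugating the letters they pass.\<close>

lemma word_prod_collect_power:
  assumes K: "K \<subseteq> carrier G" "\<And>a b. \<lbrakk>a \<in> K; b \<in> K\<rbrakk> \<Longrightarrow> a \<otimes> b \<otimes> inv a \<in> K"
    and x: "x \<in> K"
  shows "\<lbrakk>set ws \<subseteq> K; j \<le> count_list ws x\<rbrakk> \<Longrightarrow>
    \<exists>ws'. set ws' \<subseteq> K \<and> length ws' + j = length ws \<and> word_prod G ws = word_prod G ws' \<otimes> x [^] j"
proof (induction ws arbitrary: j)
  case Nil
  then show ?case by simp
next
  case (Cons a vs)
  have xc: "x \<in> carrier G" using x K by auto
  show ?case
  proof (cases "j > 0 \<and> a = x")
    case True
    then have "j - 1 \<le> count_list vs x" using Cons.prems(2) by simp
    then obtain vs' where vs': "set vs' \<subseteq> K" "length vs' + (j - 1) = length vs"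
        "word_prod G vs = word_prod G vs' \<otimes> x [^] (j - 1)"
      using Cons.IH Cons.prems(1) by (meson list.set_intros(2) subset_code(1))
    have vs'c: "set vs' \<subseteq> carrier G" using vs' K by auto
    let ?ws = "map (\<lambda>w. x \<otimes> w \<otimes> inv x) vs'"
    have "x \<otimes> x [^] (j - 1) = x [^] j"
      using True xc nat_pow_Suc2[of x "j - 1"] by simp
    then have "word_prod G (a # vs) = (x \<otimes> word_prod G vs' \<otimes> inv x) \<otimes> x [^] j"
      using True vs' vs'c xc by (simp add: m_assoc flip: \<open>x \<otimes> x [^] (j - 1) = x [^] j\<close>)
    then have "word_prod G (a # vs) = word_prod G ?ws \<otimes> x [^] j"
      using xc vs'c by (simp add: word_prod_map_conj)
    moreover have "set ?ws \<subseteq> K" "length ?ws + j = length (a # vs)"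
      using vs' True K(2) x by auto
    ultimately show ?thesis by blast
  next
    case False
    then have "j \<le> count_list vs x" using Cons.prems by (auto split: if_splits)
    then obtain vs' where vs': "set vs' \<subseteq> K" "length vs' + j = length vs"
        "word_prod G vs = word_prod G vs' \<otimes> x [^] j"
      using Cons.IH Cons.prems(1) by (meson list.set_intros(2) subset_code(1))
    have "a \<in> carrier G" "word_prod G vs' \<in> carrier G"
      using Cons.prems(1) vs'(1) K(1) by auto
    then have "word_prod G (a # vs) = word_prod G (a # vs') \<otimes> x [^] j"
      using vs'(3) xc by (simp add: m_assoc)
    moreover have "set (a # vs') \<subseteq> K" "length (a # vs') + j = length (a # vs)"
      using vs' Cons.prems(1) by auto
    ultimately show ?thesis by blast
  qed
qed

lemma word_prod_short:
  assumes K: "finite K" "K \<subseteq> carrier G" "\<And>a b. \<lbrakk>a \<in> K; b \<in> K\<rbrakk> \<Longrightarrow> a \<otimes> b \<otimes> inv a \<in> K"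
    and E: "(E::nat) > 0" "\<And>x. x \<in> K \<Longrightarrow> x [^] E = \<one>"
    and ws: "set ws \<subseteq> K"
  shows "\<exists>ws'. set ws' \<subseteq> K \<and> length ws' \<le> card K * E \<and> word_prod G ws' = word_prod G ws"
  using ws
proof (induction ws rule: length_induct)
  case (1 ws)
  show ?case
  proof (cases "length ws \<le> card K * E")
    case True
    then show ?thesis using "1.prems" by blast
  next
    case False
    have "\<exists>x\<in>K. E \<le> count_list ws x"
    proof (rule ccontr)
      assume "\<not> ?thesis"
      then have "sum (count_list ws) K \<le> card K * E"
        using sum_bounded_above[of K "count_list ws" E] by force
      then show False using sum_count_set[OF "1.prems" K(1)] False by simp
    qed
    then obtain x where x: "x \<in> K" "E \<le> count_list ws x" by blast
    obtain ws' where ws': "set ws' \<subseteq> K" "length ws' + E = length ws"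
        "word_prod G ws = word_prod G ws' \<otimes> x [^] E"
      using word_prod_collect_power[OF K(2,3) x(1) "1.prems" x(2)] by blast
    have "word_prod G ws' = word_prod G ws" using ws' E(2)[OF x(1)] K(2) by auto
    moreover have "length ws' < length ws" using ws'(2) E(1) by simp
    then obtain ws'' where "set ws'' \<subseteq> K" "length ws'' \<le> card K * E"
        "word_prod G ws'' = word_prod G ws'"
      using "1.IH" ws'(1) by blast
    ultimately show ?thesis by auto
  qed
qed

lemma generate_subset_word_prod:
  assumes K: "K \<subseteq> carrier G" and E: "(E::nat) > 0" "\<And>x. x \<in> K \<Longrightarrow> x [^] E = \<one>"
  shows "generate G K \<subseteq> word_prod G ` {ws. set ws \<subseteq> K}"
proof
  fix g assume "g \<in> generate G K"
  then show "g \<in> word_prod G ` {ws. set ws \<subseteq> K}"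
  proof (induction rule: generate.induct)
    case one
    show ?case by (rule image_eqI[where x = "[]"]) auto
  next
    case (incl h)
    then show ?case using K by (intro image_eqI[where x = "[h]"]) auto
  next
    case (inv h)
    have h: "h \<in> carrier G" using inv K by blast
    have "h [^] (E - 1) \<otimes> h = \<one>"
      using E inv h by (metis Suc_diff_1 nat_pow_Suc)
    then have "inv h = word_prod G (replicate (E - 1) h)"
      using h by (metis inv_equality nat_pow_closed word_prod_replicate)
    then show ?case using inv by (intro image_eqI[where x = "replicate (E - 1) h"]) auto
  next
    case (eng h1 h2)
    then obtain u v where "set u \<subseteq> K" "h1 = word_prod G u" "set v \<subseteq> K" "h2 = word_prod G v"
      by (auto simp: image_iff)
    then show ?case using K by (intro image_eqI[where x = "u @ v"]) (auto simp: word_prod_append)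
  qed
qed

theorem dietzmann:
  assumes K: "finite K" "K \<subseteq> carrier G" "\<And>a b. \<lbrakk>a \<in> K; b \<in> K\<rbrakk> \<Longrightarrow> a \<otimes> b \<otimes> inv a \<in> K"
    and torsion: "\<And>x. x \<in> K \<Longrightarrow> finite_order_elem G x"
  shows "finite (generate G K)"
proof -
  define E where "E = (\<Prod>x\<in>K. ord x)"
  have "E > 0" using K torsion by (simp add: E_def finite_order_elem_iff_ord)
  have E: "x [^] E = \<one>" if "x \<in> K" for x
    using that K by (auto simp: E_def pow_eq_id dvd_prodI)
  have "generate G K \<subseteq> word_prod G ` {ws. set ws \<subseteq> K \<and> length ws \<le> card K * E}"
  proof
    fix g assume "g \<in> generate G K"
    then obtain ws where ws: "set ws \<subseteq> K" "g = word_prod G ws"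
      using generate_subset_word_prod[OF K(2) \<open>E > 0\<close> E] by blast
    then obtain ws' where "set ws' \<subseteq> K" "length ws' \<le> card K * E" "word_prod G ws' = g"
      using word_prod_short[OF K \<open>E > 0\<close> E] by blast
    then show "g \<in> word_prod G ` {ws. set ws \<subseteq> K \<and> length ws \<le> card K * E}"
      by (intro image_eqI[where x = ws']) auto
  qed
  moreover have "finite {ws. set ws \<subseteq> K \<and> length ws \<le> card K * E}"
    using finite_lists_length_le[OF K(1)] .
  ultimately show ?thesis by (rule finite_subset[OF _ finite_imageI])
qed

end

section \<open>Finite terms of the upper central series\<close>

lemma finite_image_if_factors:
  assumes "finite (g ` S)" and "\<And>s t. \<lbrakk>s \<in> S; t \<in> S; g s = g t\<rbrakk> \<Longrightarrow> f s = f t"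
  shows "finite (f ` S)"
proof -
  have "f ` S \<subseteq> (\<lambda>c. f (inv_into S g c)) ` (g ` S)"
  proof
    fix y assume "y \<in> f ` S"
    then obtain s where s: "s \<in> S" "y = f s" by blast
    moreover have "inv_into S g (g s) \<in> S" "g (inv_into S g (g s)) = g s"
      using s(1) by (simp_all add: inv_into_into f_inv_into_f)
    ultimately have "y = f (inv_into S g (g s))"
      using assms(2) by metis
    then show "y \<in> (\<lambda>c. f (inv_into S g c)) ` (g ` S)" using s(1) by blast
  qed
  then show ?thesis using assms(1) by (rule finite_subset[OF _ finite_imageI])
qed

text \<open>\<open>centre_mod G N\<close> is the preimage of the centre of \<open>G/N\<close>, and \<open>upper_central G N k\<close> the
  preimage of \<open>Z\<^sub>k(G/N)\<close>; for \<open>N = {\<one>}\<close> this is the upper central series of \<open>G\<close>.\<close>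

definition centre_mod :: "('a, 'b) monoid_scheme \<Rightarrow> 'a set \<Rightarrow> 'a set" where
  "centre_mod G N = {g \<in> carrier G. \<forall>h \<in> carrier G. commutator G g h \<in> N}"

definition upper_central :: "('a, 'b) monoid_scheme \<Rightarrow> 'a set \<Rightarrow> nat \<Rightarrow> 'a set" where
  "upper_central G N k = (centre_mod G ^^ k) N"

definition conjugates :: "('a, 'b) monoid_scheme \<Rightarrow> 'a set \<Rightarrow> 'a set \<Rightarrow> 'a set" where
  "conjugates G B A = (\<lambda>(b, a). b \<otimes>\<^bsub>G\<^esub> a \<otimes>\<^bsub>G\<^esub> inv\<^bsub>G\<^esub> b) ` (B \<times> A)"

lemma upper_central_0 [simp]: "upper_central G N 0 = N"
  by (simp add: upper_central_def)

lemma upper_central_Suc: "upper_central G N (Suc k) = centre_mod G (upper_central G N k)"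
  by (simp add: upper_central_def)

lemma upper_central_Suc_right: "upper_central G N (Suc k) = upper_central G (centre_mod G N) k"
  by (simp only: upper_central_def funpow_Suc_right o_apply)

context group
begin

lemma centre_mod_normal:
  assumes "N \<lhd> G"
  shows "centre_mod G N \<lhd> G"
proof -
  interpret N: normal N G by fact
  have "subgroup (centre_mod G N) G"
  proof (rule subgroupI)
    show "centre_mod G N \<subseteq> carrier G" by (auto simp: centre_mod_def)
    show "centre_mod G N \<noteq> {}" by (auto simp: centre_mod_def intro!: exI[of _ \<one>])
  next
    fix a assume "a \<in> centre_mod G N"
    then show "inv a \<in> centre_mod G N"
      by (auto simp: centre_mod_def commutator_inv_left intro: N.inv_op_closed1)
  next
    fix a b assume "a \<in> centre_mod G N" "b \<in> centre_mod G N"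
    then show "a \<otimes> b \<in> centre_mod G N"
      by (auto simp: centre_mod_def commutator_mult_left intro!: N.m_closed N.inv_op_closed2)
  qed
  moreover have "x \<otimes> a \<otimes> inv x \<in> centre_mod G N" if "x \<in> carrier G" "a \<in> centre_mod G N" for x a
    using that by (auto simp: centre_mod_def commutator_conj_left intro!: N.inv_op_closed2)
  ultimately show ?thesis by (auto simp: normal_inv_iff)
qed

lemma normal_subset_centre_mod:
  assumes "N \<lhd> G"
  shows "N \<subseteq> centre_mod G N"
proof
  interpret N: normal N G by fact
  fix n assume n: "n \<in> N"
  have "commutator G n h = n \<otimes> (h \<otimes> inv n \<otimes> inv h)" if "h \<in> carrier G" for h
    using n that by (simp add: commutator_def m_assoc)
  then show "n \<in> centre_mod G N"
    using n by (auto simp: centre_mod_def intro!: N.m_closed N.inv_op_closed2)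
qed

lemma upper_central_normal: "N \<lhd> G \<Longrightarrow> upper_central G N k \<lhd> G"
  by (induction k) (simp_all add: upper_central_Suc centre_mod_normal)

lemma upper_central_subset_carrier: "N \<lhd> G \<Longrightarrow> upper_central G N k \<subseteq> carrier G"
  using upper_central_normal normal_imp_subgroup subgroup.subset by blast

lemma upper_central_mono:
  assumes "N \<lhd> G" "k \<le> l"
  shows "upper_central G N k \<subseteq> upper_central G N l"
proof (rule lift_Suc_mono_le[OF _ assms(2)])
  show "upper_central G N n \<subseteq> upper_central G N (Suc n)" for n
    using assms(1) by (simp add: upper_central_Suc normal_subset_centre_mod upper_central_normal)
qed

lemma finite_subset_upper_central:
  assumes "N \<lhd> G" "finite A" "\<And>a. a \<in> A \<Longrightarrow> \<exists>k. a \<in> upper_central G N k"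
  shows "\<exists>K. A \<subseteq> upper_central G N K"
proof -
  obtain f where f: "\<And>a. a \<in> A \<Longrightarrow> a \<in> upper_central G N (f a)" using assms(3) by metis
  have "f a \<le> Max (insert 0 (f ` A))" if "a \<in> A" for a using that assms(2) by simp
  then have "A \<subseteq> upper_central G N (Max (insert 0 (f ` A)))"
    using f upper_central_mono[OF assms(1)] by blast
  then show ?thesis ..
qed

lemma commutator_upper_central:
  assumes "N \<lhd> G" "u \<in> upper_central G N k" "t \<in> carrier G"
  shows "commutator G u t \<in> upper_central G N k"
proof -
  have "u \<in> centre_mod G (upper_central G N k)"
    using normal_subset_centre_mod[OF upper_central_normal[OF assms(1)]] assms(2) by blast
  then show ?thesis using assms(3) by (simp add: centre_mod_def)
qed

lemma rcos_eq_iff: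
  assumes "subgroup N G" "x \<in> carrier G" "y \<in> carrier G"
  shows "N #> x = N #> y \<longleftrightarrow> x \<otimes> inv y \<in> N"
proof
  assume "N #> x = N #> y"
  then have "x \<in> N #> y" using rcos_self[OF assms(2,1)] by simp
  then show "x \<otimes> inv y \<in> N" using subgroup.rcos_module_imp[OF assms(1) is_group assms(3)] by blast
next
  assume "x \<otimes> inv y \<in> N"
  then have "x \<in> N #> y" using subgroup.rcos_module_rev[OF assms(1) is_group assms(3,2)] by blast
  then show "N #> x = N #> y" using repr_independence[OF _ assms(3,1)] by simp
qed

lemma rcos_conj_centre_mod:
  assumes "N \<lhd> G" "n \<in> centre_mod G N" "w \<in> carrier G"
  shows "N #> (n \<otimes> w \<otimes> inv n) = N #> w"
proof -
  have n: "n \<in> carrier G" and "commutator G n w \<in> N"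
    using assms(2,3) by (auto simp: centre_mod_def)
  then have "n \<otimes> w \<otimes> inv n \<otimes> inv w \<in> N" by (simp add: commutator_def)
  then show ?thesis
    using rcos_eq_iff[OF normal_imp_subgroup[OF assms(1)]] n assms(3) by simp
qed

lemma conjugatesI: "\<lbrakk>b \<in> B; a \<in> A\<rbrakk> \<Longrightarrow> b \<otimes> a \<otimes> inv b \<in> conjugates G B A"
  by (auto simp: conjugates_def)

lemma conjugatesE:
  assumes "x \<in> conjugates G B A"
  obtains b a where "b \<in> B" "a \<in> A" "x = b \<otimes> a \<otimes> inv b"
  using assms by (auto simp: conjugates_def)

lemma subset_conjugates: "\<lbrakk>subgroup B G; A \<subseteq> carrier G\<rbrakk> \<Longrightarrow> A \<subseteq> conjugates G B A"
  using conjugatesI[of \<one> B _ A] subgroup.one_closed by fastforce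

lemma conjugates_subset: "\<lbrakk>subgroup B G; A \<subseteq> B\<rbrakk> \<Longrightarrow> conjugates G B A \<subseteq> B"
  by (auto simp: conjugates_def subgroup.m_closed subgroup.m_inv_closed)

lemma conj_conjugates:
  assumes "subgroup B G" "A \<subseteq> carrier G" "x \<in> B" "y \<in> conjugates G B A"
  shows "x \<otimes> y \<otimes> inv x \<in> conjugates G B A"
proof -
  obtain b a where ba: "b \<in> B" "a \<in> A" "y = b \<otimes> a \<otimes> inv b" using assms(4) by (rule conjugatesE)
  have "x \<in> carrier G" "b \<in> carrier G" "a \<in> carrier G"
    using assms(1-3) ba subgroup.subset by blast+
  then have "x \<otimes> y \<otimes> inv x = (x \<otimes> b) \<otimes> a \<otimes> inv (x \<otimes> b)"
    by (simp add: ba(3) m_assoc inv_mult_group)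
  then show ?thesis using conjugatesI[OF subgroup.m_closed[OF assms(1,3) ba(1)] ba(2)] by simp
qed

text \<open>Modulo \<open>N\<close>, conjugation by \<open>b\<close> only depends on the coset of \<open>b\<close> modulo
  \<open>centre_mod G N\<close>.\<close>

lemma finite_rcos_conjugates:
  assumes N: "N \<lhd> G" and B: "subgroup B G" "finite ((\<lambda>b. centre_mod G N #> b) ` B)"
    and A: "finite A" "A \<subseteq> carrier G"
  shows "finite ((\<lambda>g. N #> g) ` conjugates G B A)"
  unfolding conjugates_def image_image
proof (rule finite_image_if_factors)
  show "finite ((\<lambda>(b, a). (centre_mod G N #> b, a)) ` (B \<times> A))"
    using B(2) A(1) by (auto simp: image_iff intro: finite_subset[of _ "_ \<times> A"])
next
  fix p q
  assume "p \<in> B \<times> A" "q \<in> B \<times> A"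
    and "(case p of (b, a) \<Rightarrow> (centre_mod G N #> b, a)) = (case q of (b, a) \<Rightarrow> (centre_mod G N #> b, a))"
  then obtain b b' a where p: "p = (b, a)" "q = (b', a)" "b \<in> B" "b' \<in> B" "a \<in> A"
      and eq: "centre_mod G N #> b = centre_mod G N #> b'"
    by auto
  have c: "b \<in> carrier G" "b' \<in> carrier G" "a \<in> carrier G"
    using p B(1) A(2) subgroup.subset by blast+
  define n where "n = b \<otimes> inv b'"
  have n: "n \<in> centre_mod G N"
    using eq c N by (simp add: n_def rcos_eq_iff normal_imp_subgroup centre_mod_normal)
  then have "n \<in> carrier G" by (simp add: centre_mod_def)
  then have "b \<otimes> a \<otimes> inv b = n \<otimes> (b' \<otimes> a \<otimes> inv b') \<otimes> inv n"
    using c by (simp add: n_def m_assoc inv_mult_group)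
  then show "N #> (case p of (b, a) \<Rightarrow> b \<otimes> a \<otimes> inv b) = N #> (case q of (b, a) \<Rightarrow> b \<otimes> a \<otimes> inv b)"
    using p(1,2) rcos_conj_centre_mod[OF N n] c by simp
qed

text \<open>Dietzmann's lemma in the quotient \<open>G/N\<close>, stated in \<open>G\<close>.\<close>

lemma finite_rcos_generate_conj_closed:
  assumes N: "N \<lhd> G" and K: "K \<subseteq> carrier G" "finite ((\<lambda>g. N #> g) ` K)"
    and conj: "\<And>a b. \<lbrakk>a \<in> K; b \<in> K\<rbrakk> \<Longrightarrow> a \<otimes> b \<otimes> inv a \<in> K"
    and torsion: "\<And>x. x \<in> K \<Longrightarrow> \<exists>e>0. x [^] (e::nat) \<in> N"
  shows "finite ((\<lambda>g. N #> g) ` generate G K)"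
proof -
  interpret N: normal N G by (fact N)
  interpret Q: group "G Mod N" by (rule N.factorgroup_is_group)
  have hom: "group_hom G (G Mod N) (\<lambda>g. N #> g)"
    by (simp add: group_hom_def group_hom_axioms_def is_group Q.is_group N.r_coset_hom_Mod)
  let ?KQ = "(\<lambda>g. N #> g) ` K"
  have "finite (generate (G Mod N) ?KQ)"
  proof (rule Q.dietzmann)
    show "?KQ \<subseteq> carrier (G Mod N)" using K(1) by (auto simp: carrier_FactGroup)
  next
    fix p q assume "p \<in> ?KQ" "q \<in> ?KQ"
    then obtain a b where ab: "a \<in> K" "b \<in> K" "p = N #> a" "q = N #> b" by blast
    then have "p \<otimes>\<^bsub>G Mod N\<^esub> q \<otimes>\<^bsub>G Mod N\<^esub> inv\<^bsub>G Mod N\<^esub> p = N #> (a \<otimes> b \<otimes> inv a)"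
      using K(1) group_hom.hom_mult[OF hom] group_hom.hom_inv[OF hom] by (auto simp: subset_iff)
    then show "p \<otimes>\<^bsub>G Mod N\<^esub> q \<otimes>\<^bsub>G Mod N\<^esub> inv\<^bsub>G Mod N\<^esub> p \<in> ?KQ"
      using conj[OF ab(1,2)] by simp
  next
    fix p assume "p \<in> ?KQ"
    then obtain x where x: "x \<in> K" "p = N #> x" by blast
    obtain e :: nat where "e > 0" "x [^] e \<in> N" using torsion[OF x(1)] by blast
    moreover have "p [^]\<^bsub>G Mod N\<^esub> e = N #> (x [^] e)"
      using x K(1) N.FactGroup_pow by auto
    ultimately show "finite_order_elem (G Mod N) p"
      using x K(1) N.rcos_const[OF is_group]
      by (auto simp: finite_order_elem_def carrier_FactGroup)
  qed (use K(2) in simp)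
  then show ?thesis
    using group_hom.generate_img[OF hom K(1)] by simp
qed

lemma finite_rcos_generate_upper_central:
  assumes "N \<lhd> G" "finite A" "A \<subseteq> upper_central G N k"
    and "\<And>a. a \<in> A \<Longrightarrow> \<exists>e>0. a [^] (e::nat) \<in> N"
  shows "finite ((\<lambda>g. N #> g) ` generate G A)"
  using assms
proof (induction k arbitrary: N)
  case 0
  then have "generate G A \<subseteq> N"
    using generate_subgroup_incl normal_imp_subgroup by (metis upper_central_0)
  then have "(\<lambda>g. N #> g) ` generate G A \<subseteq> {N}"
    using subgroup.rcos_const[OF normal_imp_subgroup[OF "0.prems"(1)] is_group] by blast
  then show ?case by (rule finite_subset) simp
next
  case (Suc k)
  let ?N' = "centre_mod G N" and ?B = "generate G A"
  let ?K = "conjugates G ?B A"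
  have N': "?N' \<lhd> G" and NN': "N \<subseteq> ?N'"
    using Suc.prems(1) by (simp_all add: centre_mod_normal normal_subset_centre_mod)
  have A: "A \<subseteq> carrier G"
    using Suc.prems(1,3) upper_central_subset_carrier by blast
  have B: "subgroup ?B G" "A \<subseteq> ?B"
    using A by (simp_all add: generate_is_subgroup subset_iff generate.incl)
  have "\<exists>e>0. a [^] (e::nat) \<in> ?N'" if "a \<in> A" for a
    using Suc.prems(4)[OF that] NN' by blast
  then have fin_B: "finite ((\<lambda>b. ?N' #> b) ` ?B)"
    using Suc.IH[OF N' Suc.prems(2)] Suc.prems(3) by (simp add: upper_central_Suc_right)
  have "finite ((\<lambda>g. N #> g) ` generate G ?K)"
  proof (rule finite_rcos_generate_conj_closed[OF Suc.prems(1)])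
    show "?K \<subseteq> carrier G" using conjugates_subset[OF B] B(1) subgroup.subset by blast
    show "finite ((\<lambda>g. N #> g) ` ?K)"
      by (rule finite_rcos_conjugates[OF Suc.prems(1) B(1) fin_B Suc.prems(2) A])
    show "x \<otimes> y \<otimes> inv x \<in> ?K" if "x \<in> ?K" "y \<in> ?K" for x y
      using that conjugates_subset[OF B] conj_conjugates[OF B(1) A] by blast
  next
    fix x assume "x \<in> ?K"
    then obtain b a where ba: "b \<in> ?B" "a \<in> A" "x = b \<otimes> a \<otimes> inv b" by (rule conjugatesE)
    obtain e :: nat where e: "e > 0" "a [^] e \<in> N" using Suc.prems(4) ba(2) by blast
    have "b \<in> carrier G" "a \<in> carrier G" using ba A B(1) subgroup.subset by blast+
    then have "x [^] e \<in> N"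
      using normal.inv_op_closed2[OF Suc.prems(1) _ e(2)] by (simp add: ba(3) conj_pow)
    then show "\<exists>e>0. x [^] (e::nat) \<in> N" using e(1) by blast
  qed
  moreover have "?B \<subseteq> generate G ?K" by (rule mono_generate[OF subset_conjugates[OF B(1) A]])
  ultimately show ?case by (meson finite_subset image_mono)
qed

lemma finite_generate_upper_central:
  assumes "finite A" "A \<subseteq> upper_central G {\<one>} k" "\<And>a. a \<in> A \<Longrightarrow> finite_order_elem G a"
  shows "finite (generate G A)"
proof -
  have "finite ((\<lambda>g. {\<one>} #> g) ` generate G A)"
    using finite_rcos_generate_upper_central[OF one_is_normal assms(1,2)] assms(3)
    by (auto simp: finite_order_elem_def)
  moreover have "generate G A \<subseteq> carrier G"
    using assms(2) upper_central_subset_carrier[OF one_is_normal] generate_in_carrier by blast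
  then have "inj_on (\<lambda>g. {\<one>} #> g) (generate G A)"
    by (intro inj_onI) (auto simp: r_coset_def subset_iff)
  ultimately show ?thesis by (simp add: finite_image_iff)
qed

lemma finite_order_commutator:
  assumes c: "c \<in> upper_central G {\<one>} k" "finite_order_elem G c" and t: "t \<in> carrier G"
  shows "finite_order_elem G (commutator G c t)"
proof -
  interpret Z: normal "upper_central G {\<one>} k" G by (rule upper_central_normal[OF one_is_normal])
  have cc: "c \<in> carrier G" using c(2) by (simp add: finite_order_elem_def)
  let ?d = "t \<otimes> inv c \<otimes> inv t"
  have "finite_order_elem G (inv c)" using c(2) cc by (simp add: finite_order_elem_iff_ord)
  then have d: "?d \<in> upper_central G {\<one>} k" "finite_order_elem G ?d"
    using c(1) t by (simp_all add: Z.inv_op_closed2 finite_order_elem_conj)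
  have fin: "finite (generate G {c, ?d})"
    using c d by (intro finite_generate_upper_central) auto
  have "commutator G c t = c \<otimes> ?d" using cc t by (simp add: commutator_def m_assoc)
  then have "commutator G c t \<in> generate G {c, ?d}"
    by (simp add: generate.eng generate.incl)
  then show ?thesis
    using fin cc t by (intro finite_order_elem_of_finite_subgroup[OF generate_is_subgroup]) auto
qed

end

section \<open>Finite normal closures\<close>

definition iterated_commutators :: "('a, 'b) monoid_scheme \<Rightarrow> 'a set \<Rightarrow> 'a set \<Rightarrow> 'a set" where
  "iterated_commutators G A T = (\<lambda>(u, ts). foldl (commutator G) u ts) ` (A \<times> {ts. set ts \<subseteq> T})"

context group
begin

lemma foldl_commutator_upper_central:
  assumes "u \<in> upper_central G {\<one>} m" "set ts \<subseteq> carrier G"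
  shows "foldl (commutator G) u ts \<in> upper_central G {\<one>} (m - length ts)"
  using assms
proof (induction ts arbitrary: u m)
  case Nil
  then show ?case by simp
next
  case (Cons t ts)
  have "commutator G u t \<in> upper_central G {\<one>} (m - 1)"
  proof (cases m)
    case 0
    then show ?thesis using Cons.prems by simp
  next
    case (Suc m')
    then show ?thesis using Cons.prems by (simp add: upper_central_Suc centre_mod_def)
  qed
  then have "foldl (commutator G) (commutator G u t) ts \<in> upper_central G {\<one>} (m - 1 - length ts)"
    using Cons.IH Cons.prems(2) by (simp del: diff_diff_left)
  then show ?case by simp
qed

lemma foldl_commutator_finite_order:
  assumes "u \<in> upper_central G {\<one>} k" "finite_order_elem G u" "set ts \<subseteq> carrier G"
  shows "foldl (commutator G) u ts \<in> upper_central G {\<one>} k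
    \<and> finite_order_elem G (foldl (commutator G) u ts)"
  using assms
proof (induction ts arbitrary: u)
  case (Cons t ts)
  then have "commutator G u t \<in> upper_central G {\<one>} k"
    "finite_order_elem G (commutator G u t)"
    using commutator_upper_central[OF one_is_normal] finite_order_commutator by simp_all
  then have "foldl (commutator G) (commutator G u t) ts \<in> upper_central G {\<one>} k
      \<and> finite_order_elem G (foldl (commutator G) (commutator G u t) ts)"
    using Cons.IH Cons.prems(3) by (simp del: foldl_Cons)
  then show ?case by simp
qed simp

lemma iterated_commutatorsE:
  assumes "c \<in> iterated_commutators G A T"
  obtains u ts where "u \<in> A" "set ts \<subseteq> T" "c = foldl (commutator G) u ts"
  using assms by (auto simp: iterated_commutators_def)

lemma subset_iterated_commutators: "A \<subseteq> iterated_commutators G A T"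
  by (force simp: iterated_commutators_def intro: image_eqI[where x = "(_, [])"])

lemma commutator_iterated_commutators:
  assumes "c \<in> iterated_commutators G A T" "t \<in> T"
  shows "commutator G c t \<in> iterated_commutators G A T"
proof -
  obtain u ts where "u \<in> A" "set ts \<subseteq> T" "c = foldl (commutator G) u ts"
    using assms(1) by (rule iterated_commutatorsE)
  then show ?thesis using assms(2) unfolding iterated_commutators_def
    by (intro image_eqI[where x = "(u, ts @ [t])"]) auto
qed

lemma iterated_commutators_upper_central:
  assumes "A \<subseteq> upper_central G {\<one>} k" "\<And>a. a \<in> A \<Longrightarrow> finite_order_elem G a" "T \<subseteq> carrier G"
    and "c \<in> iterated_commutators G A T"
  shows "c \<in> upper_central G {\<one>} k \<and> finite_order_elem G c"
proof -
  obtain u ts where "u \<in> A" "set ts \<subseteq> T" "c = foldl (commutator G) u ts"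
    using assms(4) by (rule iterated_commutatorsE)
  then show ?thesis using assms(1-3) foldl_commutator_finite_order[of u k ts] by auto
qed

lemma finite_iterated_commutators:
  assumes A: "finite A" "A \<subseteq> upper_central G {\<one>} k" and T: "finite T" "T \<subseteq> carrier G"
  shows "finite (iterated_commutators G A T)"
proof -
  let ?short = "(\<lambda>(u, ts). foldl (commutator G) u ts) ` (A \<times> {ts. set ts \<subseteq> T \<and> length ts \<le> k})"
  have "iterated_commutators G A T \<subseteq> insert \<one> ?short"
  proof
    fix c assume "c \<in> iterated_commutators G A T"
    then obtain u ts where u: "u \<in> A" "set ts \<subseteq> T" "c = foldl (commutator G) u ts"
      by (rule iterated_commutatorsE)
    show "c \<in> insert \<one> ?short"
    proof (cases "length ts \<le> k")
      case True
      then show ?thesis using u by (intro insertI2 image_eqI[where x = "(u, ts)"]) auto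
    next
      case False
      have "c \<in> upper_central G {\<one>} (k - length ts)"
        using u A(2) T(2) foldl_commutator_upper_central[of u k ts] by auto
      then show ?thesis using False by simp
    qed
  qed
  moreover have "finite ?short" using A(1) T(1) by (simp add: finite_lists_length_le)
  ultimately show ?thesis by (meson finite_insert finite_subset)
qed

lemma conj_generate_closed:
  assumes "C \<subseteq> carrier G" "t \<in> carrier G" "\<And>c. c \<in> C \<Longrightarrow> t \<otimes> c \<otimes> inv t \<in> generate G C"
    and "m \<in> generate G C"
  shows "t \<otimes> m \<otimes> inv t \<in> generate G C"
proof -
  have "group_hom G G (\<lambda>x. t \<otimes> x \<otimes> inv t)"
    using assms(2) by unfold_locales (auto simp: hom_def m_assoc)
  then have "(\<lambda>x. t \<otimes> x \<otimes> inv t) ` generate G C = generate G ((\<lambda>x. t \<otimes> x \<otimes> inv t) ` C)"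
    using assms(1) by (simp add: group_hom.generate_img)
  also have "\<dots> \<subseteq> generate G C"
    using assms(1,3) by (intro generate_subgroup_incl generate_is_subgroup) auto
  finally show ?thesis using assms(4) by blast
qed

lemma normal_generateI:
  assumes T: "T \<subseteq> carrier G" "generate G T = carrier G" "\<And>t. t \<in> T \<Longrightarrow> inv t \<in> T"
    and C: "C \<subseteq> carrier G" "\<And>t c. \<lbrakk>t \<in> T; c \<in> C\<rbrakk> \<Longrightarrow> t \<otimes> c \<otimes> inv t \<in> generate G C"
  shows "generate G C \<lhd> G"
proof -
  have "g \<otimes> m \<otimes> inv g \<in> generate G C" if "g \<in> generate G T" "m \<in> generate G C" for g m
    using that
  proof (induction arbitrary: m rule: generate.induct)
    case one
    then show ?case using generate_in_carrier[OF C(1)] by auto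
  next
    case (incl t)
    then show ?case using T(1) C by (auto intro: conj_generate_closed)
  next
    case (inv t)
    then have t: "inv t \<in> T" "t \<in> carrier G" using T(1,3) by auto
    then have "inv t \<otimes> c \<otimes> t \<in> generate G C" if "c \<in> C" for c
      using C(2)[OF t(1) that] by simp
    then show ?case using conj_generate_closed[OF C(1) inv_closed[OF t(2)]] inv.prems t(2) by simp
  next
    case (eng g h)
    have "g \<in> carrier G" "h \<in> carrier G" "m \<in> carrier G"
      using eng.hyps eng.prems generate_in_carrier T(1) C(1) by blast+
    then have "g \<otimes> h \<otimes> m \<otimes> inv (g \<otimes> h) = g \<otimes> (h \<otimes> m \<otimes> inv h) \<otimes> inv g"
      by (simp add: m_assoc inv_mult_group)
    then show ?case using eng by simp
  qed
  then show ?thesis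
    using T(2) C(1) by (simp add: normal_inv_iff generate_is_subgroup)
qed

lemma normal_generate_iterated_commutators:
  assumes T: "T \<subseteq> carrier G" "generate G T = carrier G" "\<And>t. t \<in> T \<Longrightarrow> inv t \<in> T"
    and C: "iterated_commutators G A T \<subseteq> carrier G"
  shows "generate G (iterated_commutators G A T) \<lhd> G"
proof (rule normal_generateI[OF T C])
  fix t c assume t: "t \<in> T" and c: "c \<in> iterated_commutators G A T"
  have "inv (commutator G c t) \<otimes> c \<in> generate G (iterated_commutators G A T)"
    using commutator_iterated_commutators[OF c t] c C
    by (intro generate.eng generate_m_inv_closed generate.incl) auto
  moreover have "t \<in> carrier G" "c \<in> carrier G" using t c T(1) C by auto
  then have "inv (commutator G c t) \<otimes> c = t \<otimes> c \<otimes> inv t"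
    by (simp add: commutator_def inv_mult_group m_assoc)
  ultimately show "t \<otimes> c \<otimes> inv t \<in> generate G (iterated_commutators G A T)" by simp
qed

text \<open>In a finitely generated group, the normal closure of finitely many elements of finite
  order from a finite term of the upper central series is finite: it is generated by the
  iterated commutators of those elements with the generators, of which only finitely many
  are nontrivial.\<close>

lemma finite_normal_closure_upper_central:
  assumes S: "finite S" "S \<subseteq> carrier G" "generate G S = carrier G"
    and A: "finite A" "A \<subseteq> upper_central G {\<one>} k" "\<And>a. a \<in> A \<Longrightarrow> finite_order_elem G a"
  shows "\<exists>M. finite M \<and> M \<lhd> G \<and> A \<subseteq> M"
proof -
  define T where "T = S \<union> (\<lambda>s. inv s) ` S"
  let ?C = "iterated_commutators G A T"
  have T: "finite T" "T \<subseteq> carrier G" using S(1,2) by (auto simp: T_def)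
  have "generate G S \<subseteq> generate G T" by (rule mono_generate) (auto simp: T_def)
  then have gen_T: "generate G T = carrier G" using S(3) generate_in_carrier[OF T(2)] by blast
  have C: "?C \<subseteq> upper_central G {\<one>} k" "\<And>c. c \<in> ?C \<Longrightarrow> finite_order_elem G c"
    using iterated_commutators_upper_central[OF A(2,3) T(2)] by auto
  then have "?C \<subseteq> carrier G" using upper_central_subset_carrier[OF one_is_normal] by blast
  then have "generate G ?C \<lhd> G"
    using S(2) by (intro normal_generate_iterated_commutators[OF T(2) gen_T]) (auto simp: T_def)
  moreover have "finite (generate G ?C)"
    using finite_iterated_commutators[OF A(1,2) T] C by (rule finite_generate_upper_central)
  moreover have "A \<subseteq> generate G ?C"
    using subset_iterated_commutators[of A T] by (auto intro: generate.incl)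
  ultimately show ?thesis by blast
qed

end

section \<open>The hypercentre and finitely generated subgroups\<close>

lemma upper_central_step_eq: "upper_central_step G N = insert \<one>\<^bsub>G\<^esub> (centre_mod G N)"
  by (auto simp: upper_central_step_def centre_mod_def commutator_def)

lemma mono_upper_central_step: "mono (upper_central_step G)"
  by (rule monoI) (auto simp: upper_central_step_def)

lemma centralizer_set_subgroup:
  "H \<subseteq> carrier G \<Longrightarrow> centralizer_set (G\<lparr>carrier := H\<rparr>) M = centralizer_set G M \<inter> H"
  by (auto simp: centralizer_set_def)

lemma centralizer_set_antimono:
  "A \<subseteq> B \<Longrightarrow> centralizer_set G B \<subseteq> centralizer_set G A"
  by (auto simp: centralizer_set_def)

context group
begin

lemma commutator_subgroup:
  "\<lbrakk>subgroup H G; a \<in> H; b \<in> H\<rbrakk> \<Longrightarrow> commutator (G\<lparr>carrier := H\<rparr>) a b = commutator G a b"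
  by (simp add: commutator_def)

lemma finite_order_elem_subgroup:
  "\<lbrakk>subgroup H G; x \<in> H\<rbrakk> \<Longrightarrow> finite_order_elem (G\<lparr>carrier := H\<rparr>) x \<longleftrightarrow> finite_order_elem G x"
  by (auto simp: finite_order_elem_def nat_pow_consistent [symmetric] subgroup.mem_carrier)

lemma commutator_generate_normal:
  assumes N: "N \<lhd> G" and S: "S \<subseteq> carrier G" and u: "u \<in> carrier G"
    and comm: "\<And>s. s \<in> S \<Longrightarrow> commutator G u s \<in> N"
    and h: "h \<in> generate G S"
  shows "commutator G u h \<in> N"
proof -
  interpret N: normal N G by (fact N)
  show ?thesis
    using h
  proof (induction rule: generate.induct)
    case one
    then show ?case using u by simp
  next
    case (incl s)
    then show ?case by (rule comm)
  next
    case (inv s)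
    then have s: "s \<in> carrier G" using S by blast
    have "inv s \<otimes> inv (commutator G u s) \<otimes> s \<in> N"
      using N.inv_op_closed1[OF s N.m_inv_closed[OF comm[OF inv]]] .
    then show ?case using u s by (simp add: commutator_inv_right)
  next
    case (eng a b)
    then have "a \<in> carrier G" "b \<in> carrier G" using generate_in_carrier[OF S] by auto
    then show ?case
      using eng u by (simp add: commutator_mult_right N.m_closed N.inv_op_closed2)
  qed
qed

lemma upper_central_by_generator_commutators:
  assumes N: "N \<lhd> G" and S: "finite S" "S \<subseteq> carrier G" "generate G S = carrier G"
    and u: "u \<in> carrier G" "\<And>s. s \<in> S \<Longrightarrow> \<exists>k. commutator G u s \<in> upper_central G N k"
  shows "\<exists>k. u \<in> upper_central G N k"
proof -
  obtain K where K: "(\<lambda>s. commutator G u s) ` S \<subseteq> upper_central G N K"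
    using finite_subset_upper_central[OF N, of "(\<lambda>s. commutator G u s) ` S"] S(1) u(2) by auto
  have "commutator G u h \<in> upper_central G N K" if "h \<in> carrier G" for h
    using commutator_generate_normal[OF upper_central_normal[OF N] S(2) u(1)] K that S(3) by auto
  then have "u \<in> upper_central G N (Suc K)"
    using u(1) by (simp add: upper_central_Suc centre_mod_def)
  then show ?thesis ..
qed

text \<open>The hypercentre of \<open>G\<close> meets a finitely generated subgroup inside a finite term of
  the latter's upper central series, although the hypercentre itself may need transfinitely many
  steps.\<close>

lemma hypercenter_upper_central_generate:
  assumes S: "finite S" "S \<subseteq> carrier G" and u: "u \<in> hypercenter G" "u \<in> generate G S"
  shows "\<exists>k. u \<in> upper_central (G\<lparr>carrier := generate G S\<rparr>) {\<one>} k"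
proof -
  let ?H = "generate G S"
  let ?L = "G\<lparr>carrier := ?H\<rparr>"
  have H: "subgroup ?H G" using S(2) by (rule generate_is_subgroup)
  interpret L: group ?L using H is_group by (rule subgroup.subgroup_is_group)
  have SH: "S \<subseteq> ?H" by (auto intro: generate.incl)
  have genL: "generate ?L S = carrier ?L" using generate_consistent[OF SH H] by simp
  define P where "P x \<longleftrightarrow> (x \<in> ?H \<longrightarrow> (\<exists>k. x \<in> upper_central ?L {\<one>} k))" for x
  have "P u"
  proof (rule lfp_induct_set[OF u(1)[unfolded hypercenter_def] mono_upper_central_step])
    fix x assume "x \<in> upper_central_step G (lfp (upper_central_step G) \<inter> {x. P x})"
    then consider "x = \<one>" | "x \<in> carrier G" "\<And>h. h \<in> carrier G \<Longrightarrow> P (commutator G x h)"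
      by (auto simp: upper_central_step_eq centre_mod_def)
    then show "P x"
    proof cases
      case 1
      then show ?thesis by (auto simp: P_def intro: exI[of _ 0])
    next
      case 2
      show ?thesis unfolding P_def
      proof
        assume x: "x \<in> ?H"
        have "\<exists>k. commutator ?L x s \<in> upper_central ?L {\<one>} k" if s: "s \<in> S" for s
        proof -
          have "commutator ?L x s = commutator G x s" "commutator G x s \<in> ?H"
            using x s SH commutator_subgroup[OF H] L.commutator_closed[of x s] by auto
          then show ?thesis using 2 s SH S(2) by (auto simp: P_def)
        qed
        then show "\<exists>k. x \<in> upper_central ?L {\<one>} k"
          using L.upper_central_by_generator_commutators[OF L.one_is_normal S(1) _ genL] SH x by simp
      qed
    qed
  qed
  then show ?thesis using u(2) by (simp add: P_def)
qed

lemma finite_carrier_by_centralizer: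
  assumes M: "finite M" "M \<lhd> G" and cen: "centralizer_set G M \<subseteq> M"
  shows "finite (carrier G)"
proof -
  interpret M: normal M G by (fact M(2))
  define \<phi> where "\<phi> g = (\<lambda>m \<in> M. g \<otimes> m \<otimes> inv g)" for g
  let ?rep = "inv_into (carrier G) \<phi>"
  have "\<phi> ` carrier G \<subseteq> M \<rightarrow>\<^sub>E M" by (auto simp: \<phi>_def M.inv_op_closed2)
  then have fin_\<phi>: "finite (\<phi> ` carrier G)" using M(1) finite_PiE finite_subset by metis
  \<comment> \<open>\<open>g\<close> and the representative of \<open>\<phi> g\<close> differ by an element centralizing \<open>M\<close>\<close>
  have "carrier G \<subseteq> (\<lambda>(c, m). ?rep c \<otimes> m) ` (\<phi> ` carrier G \<times> M)"
  proof
    fix g assume g: "g \<in> carrier G"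
    define r where "r = ?rep (\<phi> g)"
    have r: "r \<in> carrier G" "\<phi> r = \<phi> g" using g by (auto simp: r_def inv_into_into f_inv_into_f)
    define z where "z = inv r \<otimes> g"
    have z: "z \<in> carrier G" using r g by (simp add: z_def)
    have "z \<otimes> m = m \<otimes> z" if m: "m \<in> M" for m
    proof -
      have "r \<otimes> m \<otimes> inv r = g \<otimes> m \<otimes> inv g" using fun_cong[OF r(2), of m] m by (simp add: \<phi>_def)
      then have "inv r \<otimes> (r \<otimes> m \<otimes> inv r) \<otimes> g = inv r \<otimes> (g \<otimes> m \<otimes> inv g) \<otimes> g" by simp
      then show ?thesis using r g m by (simp add: z_def m_assoc)
    qed
    then have "z \<in> M" using cen z by (auto simp: centralizer_set_def)
    moreover have "g = r \<otimes> z" using r g by (simp add: z_def)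
    ultimately show "g \<in> (\<lambda>(c, m). ?rep c \<otimes> m) ` (\<phi> ` carrier G \<times> M)"
      using g by (intro image_eqI[where x = "(\<phi> g, z)"]) (auto simp: r_def)
  qed
  then show ?thesis using fin_\<phi> M(1) by (meson finite_SigmaI finite_imageI finite_subset)
qed

lemma finite_generate_by_self_centralizing_hypercentral:
  assumes S: "finite S" "S \<subseteq> carrier G"
    and A: "finite A" "A \<subseteq> hypercenter G \<inter> generate G S" "\<And>a. a \<in> A \<Longrightarrow> finite_order_elem G a"
    and cen: "centralizer_set G (generate G A) \<subseteq> generate G A"
  shows "finite (generate G S)"
proof -
  let ?H = "generate G S"
  let ?L = "G\<lparr>carrier := ?H\<rparr>"
  have H: "subgroup ?H G" using S(2) by (rule generate_is_subgroup)
  interpret L: group ?L using H is_group by (rule subgroup.subgroup_is_group)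
  have SH: "S \<subseteq> ?H" by (auto intro: generate.incl)
  have AH: "A \<subseteq> ?H" using A(2) by blast
  obtain K where K: "A \<subseteq> upper_central ?L {\<one>} K"
    using L.finite_subset_upper_central[OF L.one_is_normal A(1)]
      hypercenter_upper_central_generate[OF S] A(2) by auto
  obtain M where M: "finite M" "M \<lhd> ?L" "A \<subseteq> M"
  proof (rule exE[OF L.finite_normal_closure_upper_central[OF S(1) _ _ A(1)]])
    show "S \<subseteq> carrier ?L" "generate ?L S = carrier ?L"
      using SH generate_consistent[OF SH H] by auto
    show "A \<subseteq> upper_central ?L {\<one>\<^bsub>?L\<^esub>} K" using K by simp
    show "finite_order_elem ?L a" if "a \<in> A" for a
      using A(3)[OF that] AH that finite_order_elem_subgroup[OF H] by blast
  qed (use that in blast)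
  have "generate G A \<subseteq> M"
    using L.generate_subgroup_incl[OF M(3) normal_imp_subgroup[OF M(2)]] generate_consistent[OF AH H]
    by simp
  then have "centralizer_set ?L M \<subseteq> centralizer_set G (generate G A)"
    using centralizer_set_subgroup[OF subgroup.subset[OF H]] centralizer_set_antimono by blast
  then have "centralizer_set ?L M \<subseteq> M"
    using cen \<open>generate G A \<subseteq> M\<close> by blast
  then show ?thesis using L.finite_carrier_by_centralizer[OF M(1,2)] by simp
qed

end

theorem corollary5p5:
  fixes G (structure)
  assumes "group G"
    and "locally_soluble G"
    and "\<And>H. \<lbrakk> subgroup H G; \<exists>a\<in>H. \<exists>b\<in>H. a \<otimes> b \<noteq> b \<otimes> a \<rbrakk>
              \<Longrightarrow> centralizer_set G H \<subseteq> H"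
    and "\<exists>x\<in>hypercenter G. \<exists>y\<in>hypercenter G.
           finite_order_elem G x \<and> finite_order_elem G y \<and> x \<otimes> y \<noteq> y \<otimes> x"
  shows "locally_finite_group G"
proof -
  interpret group G by fact
  obtain x y where xy: "x \<in> hypercenter G" "y \<in> hypercenter G"
      "finite_order_elem G x" "finite_order_elem G y" "x \<otimes> y \<noteq> y \<otimes> x"
    using assms(4) by blast
  then have xy_carrier: "{x, y} \<subseteq> carrier G" by (simp add: finite_order_elem_def)
  have cen: "centralizer_set G (generate G {x, y}) \<subseteq> generate G {x, y}"
    using assms(3)[OF generate_is_subgroup[OF xy_carrier]] xy(5) generate.incl[of _ "{x, y}" G]
    by blast
  show ?thesis unfolding locally_finite_group_def
  proof (intro allI impI)
    fix S assume S: "S \<subseteq> carrier G \<and> finite S"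
    have "finite (generate G ({x, y} \<union> S))"
      using S xy xy_carrier cen
      by (intro finite_generate_by_self_centralizing_hypercentral) (auto intro: generate.incl)
    then show "finite (generate G S)" by (rule finite_subset[OF mono_generate, rotated]) auto
  qed
qed

end
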